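(* Let $q,k\geq 0$ and let $\vec{x}=(x_0,\ldots,x_k)$ be a vector of nonnegative integers. Paul has a winning strategy for the $q$-round pathological liar game with $k$ lies and initial state $\vec{x}$ if and only if there exists an $\vec{x}$-covering of $Q_q$. Similarly, Paul has a winning strategy for the $q$-round original liar game with $k$ lies and initial state $\vec{x}$ if and only if there exists an $\vec{x}$-packing of $Q_q$.
   Context: Liar games: a state is $\vec{x}=(x_0,\ldots,x_k)$ of nonnegative integers ($x_i$ = number of elements carrying $i$ lies). In each of $q$ rounds Paul chooses a legal question $\vec{a}=(a_0,\ldots,a_k)$ with integers $0\leq a_i\leq x_i$, and Carole answers Y or N; the new state is $Y(\vec{x},\vec{a})=(a_0,\,a_1+x_0-a_0,\,\ldots,\,a_k+x_{k-1}-a_{k-1})$ or $N(\vec{x},\vec{a})=(x_0-a_0,\,x_1-a_1+a_0,\,\ldots,\,x_k-a_k+a_{k-1})$ respectively. In the pathological game Paul wins iff after $q$ rounds $\sum_i x_i\geq 1$; in the original game Paul wins iff after $q$ rounds $\sum_i x_i\leq 1$. Hypercube: $Q_q=\{Y,N\}^q$, with complementation $\overline{Y}=N$, $\overline{N}=Y$. For $i\geq 0$ let $\binom{[q]}{\leq i}$ be the family of subsets of $[q]=\{1,\ldots,q\}$ of size at most $i$. An $i$-quasiball in $Q_q$ is the image $f(\binom{[q]}{\leq i})$ of an injective map $f:\binom{[q]}{\leq i}\to Q_q$ with the property: whenever $A=\{p_1,\ldots,p_{|A|}\}$ and $B=\{p_1,\ldots,p_{|A|},p_{|A|+1},\ldots,p_{|B|}\}$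 lie in $\binom{[q]}{\leq i}$ with $p_1<\cdots<p_{|A|}<p_{|A|+1}<\cdots<p_{|B|}$ and $|B|>|A|$, and $f(A)=\omega_1\cdots\omega_q$, then $f(B)=\omega_1\cdots\omega_{p_{|A|+1}-1}\,\overline{\omega}_{p_{|A|+1}}\,\omega'_{p_{|A|+1}+1}\cdots\omega'_q$ for some arbitrary $\omega'_{p_{|A|+1}+1}\cdots\omega'_q\in\{Y,N\}^{q-p_{|A|+1}}$ (i.e. $f(B)$ agrees with $f(A)$ before position $p_{|A|+1}$ and differs from it at that position). An $\vec{x}$-covering of $Q_q$ is a collection consisting of $x_i$ $(k-i)$-quasiballs for each $0\leq i\leq k$ whose union is $Q_q$; an $\vec{x}$-packing of $Q_q$ is such a collection whose members are pairwise disjoint (the union need not be $Q_q$). *)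

theory Defs
  imports Main
begin

(* States and questions: lists of length k+1, entry i = number of elements with i lies. *)

definition legal_question :: "nat list \<Rightarrow> nat list \<Rightarrow> bool" where
  "legal_question x a \<longleftrightarrow> length a = length x \<and> (\<forall>i<length x. a ! i \<le> x ! i)"

definition yes_state :: "nat list \<Rightarrow> nat list \<Rightarrow> nat list" where
  "yes_state x a = map (\<lambda>i. if i = 0 then a ! 0 else a ! i + (x ! (i - 1) - a ! (i - 1))) [0..<length x]"

definition no_state :: "nat list \<Rightarrow> nat list \<Rightarrow> nat list" where
  "no_state x a = map (\<lambda>i. if i = 0 then x ! 0 - a ! 0 else (x ! i - a ! i) + a ! (i - 1)) [0..<length x]"

fun paul_wins :: "(nat list \<Rightarrow> bool) \<Rightarrow> nat \<Rightarrow> nat list \<Rightarrow> bool" where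
  "paul_wins P 0 x = P x"
| "paul_wins P (Suc q) x =
     (\<exists>a. legal_question x a \<and> paul_wins P q (yes_state x a) \<and> paul_wins P q (no_state x a))"

definition pathological_win :: "nat \<Rightarrow> nat list \<Rightarrow> bool" where
  "pathological_win q x = paul_wins (\<lambda>y. sum_list y \<ge> 1) q x"

definition original_win :: "nat \<Rightarrow> nat list \<Rightarrow> bool" where
  "original_win q x = paul_wins (\<lambda>y. sum_list y \<le> 1) q x"

(* Hypercube Q_q: words over {Y,N} of length q, Y = True, N = False;
   position j (1 \<le> j \<le> q) of word w is w ! (j - 1). *)
definition hypercube :: "nat \<Rightarrow> bool list set" where
  "hypercube q = {w. length w = q}"

definition small_subsets :: "nat \<Rightarrow> nat \<Rightarrow> nat set set" where
  "small_subsets q i = {A. A \<subseteq> {1..q} \<and> card A \<le> i}"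

definition quasiball_map :: "nat \<Rightarrow> nat \<Rightarrow> (nat set \<Rightarrow> bool list) \<Rightarrow> bool" where
  "quasiball_map q i f \<longleftrightarrow>
     inj_on f (small_subsets q i) \<and> f ` small_subsets q i \<subseteq> hypercube q \<and>
     (\<forall>A\<in>small_subsets q i. \<forall>B\<in>small_subsets q i.
        (A \<subseteq> B \<and> card A < card B \<and> (\<forall>a\<in>A. \<forall>b\<in>B - A. a < b)) \<longrightarrow>
          (let p = Min (B - A) in
             (\<forall>j. 1 \<le> j \<and> j < p \<longrightarrow> f B ! (j - 1) = f A ! (j - 1)) \<and>
             f B ! (p - 1) \<noteq> f A ! (p - 1)))"

definition quasiball :: "nat \<Rightarrow> nat \<Rightarrow> bool list set \<Rightarrow> bool" where
  "quasiball q i S \<longleftrightarrow> (\<exists>f. quasiball_map q i f \<and> S = f ` small_subsets q i)"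

definition x_covering :: "nat \<Rightarrow> nat list \<Rightarrow> (nat \<Rightarrow> nat \<Rightarrow> bool list set) \<Rightarrow> bool" where
  "x_covering q x B \<longleftrightarrow>
     (\<forall>i<length x. \<forall>j<x ! i. quasiball q (length x - 1 - i) (B i j)) \<and>
     (\<Union>i<length x. \<Union>j<x ! i. B i j) = hypercube q"

definition x_packing :: "nat \<Rightarrow> nat list \<Rightarrow> (nat \<Rightarrow> nat \<Rightarrow> bool list set) \<Rightarrow> bool" where
  "x_packing q x B \<longleftrightarrow>
     (\<forall>i<length x. \<forall>j<x ! i. quasiball q (length x - 1 - i) (B i j)) \<and>
     (\<forall>i<length x. \<forall>j<x ! i. \<forall>i'<length x. \<forall>j'<x ! i'.
        (i, j) \<noteq> (i', j') \<longrightarrow> B i j \<inter> B i' j' = {})"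

end

theory Submission
  imports Defs
begin

text \<open>
  Both equivalences are instances of one statement about an arbitrary winning condition \<open>P\<close> on the
  number of surviving elements: Paul wins iff there is a family of quasiballs, \<open>x ! i\<close> of them of
  radius \<open>k - i\<close>, such that the number \<open>n\<close> of balls containing any word of \<open>Q\<^sub>q\<close> satisfies
  \<open>P n\<close>. Covering and packing are the cases \<open>1 \<le> n\<close> and \<open>n \<le> 1\<close>.

  The induction on \<open>q\<close> rests on the recursive description of quasiballs: an \<open>r\<close>-quasiball in
  \<open>Q\<^bsub>q+1\<^esub>\<close> is \<open>b\<cdot>S\<^sub>1 \<union> (\<not>b)\<cdot>S\<^sub>2\<close> with \<open>S\<^sub>1\<close> an \<open>r\<close>-quasiball and \<open>S\<^sub>2\<close> an \<open>(r-1)\<close>-quasiball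
  (empty if \<open>r = 0\<close>) in \<open>Q\<^sub>q\<close>. So the first letter \<open>b\<close> of a ball is the answer under which its
  element keeps its number of lies. Given a family for \<open>x\<close>, the question counting the balls
  starting with Y turns the residual families after each answer into families for the two child
  states, with the same multiplicities. Conversely, families for the two child states are glued
  ball by ball along a bijection between the elements of \<open>x\<close> and those of the child states.
\<close>

lemma small_subsets_iff: "A \<in> small_subsets q r \<longleftrightarrow> A \<subseteq> {1..q} \<and> card A \<le> r"
  by (simp add: small_subsets_def)

lemma finite_small_subset: "A \<in> small_subsets q r \<Longrightarrow> finite A"
  by (auto simp: small_subsets_iff intro: finite_subset)

lemma small_subsets_mono:
  assumes "A \<in> small_subsets q r" "A' \<subseteq> A"
  shows "A' \<in> small_subsets q r"
  using assms card_mono[OF finite_small_subset[OF assms(1)] assms(2)] by (auto simp: small_subsets_iff)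

lemma mem_hypercube_iff [simp]: "w \<in> hypercube q \<longleftrightarrow> length w = q"
  by (simp add: hypercube_def)

definition branches_at :: "(nat set \<Rightarrow> bool list) \<Rightarrow> nat set \<Rightarrow> nat \<Rightarrow> bool" where
  "branches_at f B p \<longleftrightarrow>
     take (p - 1) (f B) = take (p - 1) (f (B \<inter> {..<p})) \<and> f B ! (p - 1) \<noteq> f (B \<inter> {..<p}) ! (p - 1)"

lemma all_less_diff_one_iff: "(\<forall>j<(p::nat) - 1. P j) \<longleftrightarrow> (\<forall>j. 1 \<le> j \<and> j < p \<longrightarrow> P (j - 1))"
proof (intro iffI allI impI)
  fix j assume "\<forall>j<p - 1. P j" "1 \<le> j \<and> j < p"
  then show "P (j - 1)" by (simp add: diff_less_mono)
next
  fix j assume "\<forall>j. 1 \<le> j \<and> j < p \<longrightarrow> P (j - 1)" "j < p - 1"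
  then show "P j" by (auto dest: spec[of _ "Suc j"])
qed

lemma initial_segment_eq_Int_lessThan:
  assumes "finite B" "A \<subset> B" "\<forall>a\<in>A. \<forall>b\<in>B - A. a < b"
  shows "Min (B - A) \<in> B" "A = B \<inter> {..<Min (B - A)}"
proof -
  have "Min (B - A) \<in> B - A"
    using assms by (intro Min_in) auto
  then show "Min (B - A) \<in> B" by blast
  show "A = B \<inter> {..<Min (B - A)}"
  proof
    show "A \<subseteq> B \<inter> {..<Min (B - A)}"
      using assms \<open>Min (B - A) \<in> B - A\<close> by auto
    show "B \<inter> {..<Min (B - A)} \<subseteq> A"
    proof
      fix b assume "b \<in> B \<inter> {..<Min (B - A)}"
      then have "b \<in> B" "b < Min (B - A)" by auto
      show "b \<in> A"
      proof (rule ccontr)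
        assume "b \<notin> A"
        then have "Min (B - A) \<le> b" using \<open>finite B\<close> \<open>b \<in> B\<close> by (intro Min_le) auto
        then show False using \<open>b < Min (B - A)\<close> by simp
      qed
    qed
  qed
qed

lemma Min_diff_Int_lessThan: "finite B \<Longrightarrow> p \<in> B \<Longrightarrow> Min (B - B \<inter> {..<p}) = p"
  by (rule Min_eqI) auto

lemma small_subsets_initial_segments_iff:
  "(\<forall>A\<in>small_subsets q r. \<forall>B\<in>small_subsets q r.
      A \<subseteq> B \<and> card A < card B \<and> (\<forall>a\<in>A. \<forall>b\<in>B - A. a < b) \<longrightarrow> \<Phi> A B (Min (B - A))) \<longleftrightarrow>
   (\<forall>B\<in>small_subsets q r. \<forall>p\<in>B. \<Phi> (B \<inter> {..<p}) B p)"
  (is "?segments \<longleftrightarrow> ?cuts")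
proof
  assume ?segments
  show ?cuts
  proof (intro ballI)
    fix B p assume B: "B \<in> small_subsets q r" and p: "p \<in> B"
    have fin: "finite B" using B by (rule finite_small_subset)
    have "B \<inter> {..<p} \<in> small_subsets q r" using B by (rule small_subsets_mono) blast
    moreover have "card (B \<inter> {..<p}) < card B" using fin p by (intro psubset_card_mono) auto
    ultimately have "\<Phi> (B \<inter> {..<p}) B (Min (B - B \<inter> {..<p}))"
      using B by (intro \<open>?segments\<close>[rule_format]) auto
    then show "\<Phi> (B \<inter> {..<p}) B p" by (simp only: Min_diff_Int_lessThan[OF fin p])
  qed
next
  assume ?cuts
  show ?segments
  proof (intro ballI impI, elim conjE)
    fix A B assume B: "B \<in> small_subsets q r"
      and "A \<subseteq> B" "card A < card B" and ordered: "\<forall>a\<in>A. \<forall>b\<in>B - A. a < b"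
    then have "A \<subset> B" by auto
    note segment = initial_segment_eq_Int_lessThan[OF finite_small_subset[OF B] this ordered]
    show "\<Phi> A B (Min (B - A))"
      using \<open>?cuts\<close> B segment by metis
  qed
qed

lemma branches_at_iff_nth:
  assumes B: "B \<in> small_subsets q r" and p: "p \<in> B" and range: "f ` small_subsets q r \<subseteq> hypercube q"
  shows "branches_at f B p \<longleftrightarrow>
    (\<forall>j. 1 \<le> j \<and> j < p \<longrightarrow> f B ! (j - 1) = f (B \<inter> {..<p}) ! (j - 1)) \<and>
    f B ! (p - 1) \<noteq> f (B \<inter> {..<p}) ! (p - 1)"
proof -
  have "B \<inter> {..<p} \<in> small_subsets q r" using B by (rule small_subsets_mono) blast
  moreover have "p \<le> q" using B p by (auto simp: small_subsets_iff)
  ultimately have "p - 1 \<le> length (f (B \<inter> {..<p}))" "p - 1 \<le> length (f B)" using B range by auto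
  then have "take (p - 1) (f B) = take (p - 1) (f (B \<inter> {..<p})) \<longleftrightarrow>
      (\<forall>j. 1 \<le> j \<and> j < p \<longrightarrow> f B ! (j - 1) = f (B \<inter> {..<p}) ! (j - 1))"
    using all_less_diff_one_iff[of p "\<lambda>j. f B ! j = f (B \<inter> {..<p}) ! j"]
    by (simp add: list_eq_iff_nth_eq)
  then show ?thesis by (simp add: branches_at_def)
qed

lemma quasiball_map_iff_branches_at:
  "quasiball_map q r f \<longleftrightarrow>
     inj_on f (small_subsets q r) \<and> f ` small_subsets q r \<subseteq> hypercube q \<and>
     (\<forall>B\<in>small_subsets q r. \<forall>p\<in>B. branches_at f B p)"
proof -
  let ?branch = "\<lambda>A B p.
    (\<forall>j. 1 \<le> j \<and> j < p \<longrightarrow> f B ! (j - 1) = f A ! (j - 1)) \<and> f B ! (p - 1) \<noteq> f A ! (p - 1)"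
  have "f ` small_subsets q r \<subseteq> hypercube q \<longrightarrow>
      ((\<forall>B\<in>small_subsets q r. \<forall>p\<in>B. ?branch (B \<inter> {..<p}) B p) \<longleftrightarrow>
       (\<forall>B\<in>small_subsets q r. \<forall>p\<in>B. branches_at f B p))"
    using branches_at_iff_nth by simp
  then show ?thesis
    unfolding quasiball_map_def Let_def small_subsets_initial_segments_iff[where \<Phi> = ?branch] by argo
qed

definition shift_down :: "nat set \<Rightarrow> nat set" where
  "shift_down A = {n. 0 < n \<and> Suc n \<in> A}"

lemma shift_down_Suc_image: "0 \<notin> A \<Longrightarrow> shift_down (Suc ` A) = A"
  unfolding shift_down_def by (auto simp: inj_image_mem_iff) (metis gr0I)

lemma shift_down_insert_one: "0 \<notin> A \<Longrightarrow> shift_down (insert (Suc 0) (Suc ` A)) = A"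
  unfolding shift_down_def by (auto simp: inj_image_mem_iff) (metis gr0I)

lemma zero_notin_small_subset: "A \<in> small_subsets q r \<Longrightarrow> 0 \<notin> A"
  by (auto simp: small_subsets_iff)

lemma Suc_image_in_small_subsets: "A \<in> small_subsets q r \<Longrightarrow> Suc ` A \<in> small_subsets (Suc q) r"
  by (auto simp: small_subsets_iff card_image)

lemma insert_one_Suc_image_in_small_subsets:
  assumes "A \<in> small_subsets q (r - 1)" "r \<noteq> 0"
  shows "insert (Suc 0) (Suc ` A) \<in> small_subsets (Suc q) r"
  using assms finite_small_subset[OF assms(1)] zero_notin_small_subset[OF assms(1)]
  by (auto simp: small_subsets_iff card_image inj_image_mem_iff)

lemma small_subsets_Suc_cases:
  assumes "A \<in> small_subsets (Suc q) r"
  obtains (Suc_image) A' where "A' \<in> small_subsets q r" "A = Suc ` A'"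
    | (insert_one) A' where "r \<noteq> 0" "A' \<in> small_subsets q (r - 1)" "A = insert (Suc 0) (Suc ` A')"
proof -
  have A: "A \<subseteq> {1..Suc q}" "card A \<le> r" "finite A"
    using assms finite_small_subset by (auto simp: small_subsets_iff)
  have down: "shift_down A \<subseteq> {1..q}" using A by (auto simp: shift_down_def)
  have "A - {1} = Suc ` shift_down A"
  proof
    show "A - {1} \<subseteq> Suc ` shift_down A"
    proof
      fix n assume "n \<in> A - {1}"
      then have "n = Suc (n - 1)" "n - 1 \<in> shift_down A" using A by (auto simp: shift_down_def)
      then show "n \<in> Suc ` shift_down A" by (metis imageI)
    qed
  qed (auto simp: shift_down_def)
  show thesis
  proof (cases "1 \<in> A")
    case False
    then have "A = Suc ` shift_down A" using \<open>A - {1} = _\<close> by auto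
    moreover have "card (shift_down A) \<le> r"
      using A calculation by (metis card_image inj_Suc inj_on_subset subset_UNIV)
    ultimately show thesis using down by (intro Suc_image) (auto simp: small_subsets_iff)
  next
    case True
    then have eq: "A = insert (Suc 0) (Suc ` shift_down A)" using \<open>A - {1} = _\<close> by auto
    have "finite (shift_down A)" "0 \<notin> shift_down A"
      using down finite_subset by (auto simp: shift_down_def)
    then have "card A = Suc (card (shift_down A))"
      by (subst eq) (simp add: card_image inj_image_mem_iff)
    then show thesis using A down eq by (intro insert_one) (auto simp: small_subsets_iff)
  qed
qed

lemma Cons_image_subset_hypercube_Suc_iff: "Cons c ` X \<subseteq> hypercube (Suc q) \<longleftrightarrow> X \<subseteq> hypercube q"
  by auto

context
  fixes q r :: nat and b :: bool and f :: "nat set \<Rightarrow> bool list" and g h :: "nat set \<Rightarrow> bool list"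
  assumes f_Suc_image: "\<And>A. A \<in> small_subsets q r \<Longrightarrow> f (Suc ` A) = b # g A"
    and f_insert_one:
      "\<And>A. r \<noteq> 0 \<Longrightarrow> A \<in> small_subsets q (r - 1) \<Longrightarrow> f (insert (Suc 0) (Suc ` A)) = (\<not> b) # h A"
begin

lemma image_small_subsets_Suc:
  "f ` small_subsets (Suc q) r =
     Cons b ` g ` small_subsets q r \<union>
     (if r = 0 then {} else Cons (\<not> b) ` h ` small_subsets q (r - 1))"
  (is "_ = ?image")
proof (intro equalityI subsetI)
  fix w assume "w \<in> f ` small_subsets (Suc q) r"
  then obtain A where A: "A \<in> small_subsets (Suc q) r" and w: "w = f A" by blast
  from A show "w \<in> ?image"
    by (cases rule: small_subsets_Suc_cases) (auto simp: w f_Suc_image f_insert_one)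
next
  fix w assume "w \<in> ?image"
  then show "w \<in> f ` small_subsets (Suc q) r"
    using f_Suc_image f_insert_one Suc_image_in_small_subsets insert_one_Suc_image_in_small_subsets
    by (auto split: if_splits) (metis image_eqI)+
qed

lemma inj_on_small_subsets_Suc_iff:
  "inj_on f (small_subsets (Suc q) r) \<longleftrightarrow>
     inj_on g (small_subsets q r) \<and> (r \<noteq> 0 \<longrightarrow> inj_on h (small_subsets q (r - 1)))"
proof (intro iffI conjI impI inj_onI)
  assume inj: "inj_on f (small_subsets (Suc q) r)"
  fix A A' assume A: "A \<in> small_subsets q r" and A': "A' \<in> small_subsets q r" and eq: "g A = g A'"
  have "f (Suc ` A) = f (Suc ` A')" using eq by (simp add: f_Suc_image A A')
  then have "Suc ` A = Suc ` A'"
    by (rule inj_onD[OF inj _ Suc_image_in_small_subsets[OF A] Suc_image_in_small_subsets[OF A']])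
  then show "A = A'" by (simp add: inj_image_eq_iff)
next
  assume inj: "inj_on f (small_subsets (Suc q) r)" and r: "r \<noteq> 0"
  fix A A' assume A: "A \<in> small_subsets q (r - 1)" and A': "A' \<in> small_subsets q (r - 1)"
    and eq: "h A = h A'"
  have "f (insert (Suc 0) (Suc ` A)) = f (insert (Suc 0) (Suc ` A'))"
    using eq f_insert_one[OF r A] f_insert_one[OF r A'] by simp
  then have "insert (Suc 0) (Suc ` A) = insert (Suc 0) (Suc ` A')"
    by (rule inj_onD[OF inj _ insert_one_Suc_image_in_small_subsets[OF A r]
          insert_one_Suc_image_in_small_subsets[OF A' r]])
  then show "A = A'"
    by (metis shift_down_insert_one zero_notin_small_subset A A')
next
  assume "inj_on g (small_subsets q r) \<and> (r \<noteq> 0 \<longrightarrow> inj_on h (small_subsets q (r - 1)))"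
  then have inj_g: "inj_on g (small_subsets q r)"
    and inj_h: "r \<noteq> 0 \<Longrightarrow> inj_on h (small_subsets q (r - 1))"
    by auto
  fix A A' assume A: "A \<in> small_subsets (Suc q) r" and A': "A' \<in> small_subsets (Suc q) r"
    and eq: "f A = f A'"
  from A A' show "A = A'"
  proof (cases rule: small_subsets_Suc_cases[case_product small_subsets_Suc_cases])
    case (Suc_image_Suc_image B B')
    then show ?thesis using eq inj_g by (auto simp: f_Suc_image dest: inj_onD)
  next
    case (Suc_image_insert_one B B')
    then show ?thesis using eq by (simp add: f_Suc_image f_insert_one)
  next
    case (insert_one_Suc_image B B')
    then show ?thesis using eq by (simp add: f_Suc_image f_insert_one)
  next
    case (insert_one_insert_one B B')
    then show ?thesis using eq inj_h by (auto simp: f_insert_one dest: inj_onD)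
  qed
qed


lemma branches_at_Suc_image_iff:
  assumes B: "B \<in> small_subsets q r" and p: "p \<in> B"
  shows "branches_at f (Suc ` B) (Suc p) \<longleftrightarrow> branches_at g B p"
proof -
  have "p \<noteq> 0" using p zero_notin_small_subset[OF B] by (cases p) auto
  have "B \<inter> {..<p} \<in> small_subsets q r" using B by (rule small_subsets_mono) blast
  moreover have "Suc ` B \<inter> {..<Suc p} = Suc ` (B \<inter> {..<p})" by auto
  ultimately show ?thesis
    using \<open>p \<noteq> 0\<close> by (simp add: branches_at_def f_Suc_image B take_Cons' nth_Cons')
qed

lemma branches_at_insert_one_iff:
  assumes r: "r \<noteq> 0" and B: "B \<in> small_subsets q (r - 1)" and p: "p \<in> B"
  shows "branches_at f (insert (Suc 0) (Suc ` B)) (Suc p) \<longleftrightarrow> branches_at h B p"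
proof -
  have "p \<noteq> 0" using p zero_notin_small_subset[OF B] by (cases p) auto
  have "B \<inter> {..<p} \<in> small_subsets q (r - 1)" using B by (rule small_subsets_mono) blast
  moreover have "insert (Suc 0) (Suc ` B) \<inter> {..<Suc p} = insert (Suc 0) (Suc ` (B \<inter> {..<p}))"
    using \<open>p \<noteq> 0\<close> by auto
  ultimately show ?thesis
    using \<open>p \<noteq> 0\<close> f_insert_one[OF r B] f_insert_one[OF r]
    by (simp add: branches_at_def take_Cons' nth_Cons')
qed

lemma branches_at_insert_one_one:
  assumes r: "r \<noteq> 0" and B: "B \<in> small_subsets q (r - 1)"
  shows "branches_at f (insert (Suc 0) (Suc ` B)) (Suc 0)"
proof -
  have "{} \<in> small_subsets q r" by (simp add: small_subsets_iff)
  then have "f {} = b # g {}" using f_Suc_image by fastforce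
  moreover have "insert (Suc 0) (Suc ` B) \<inter> {..<Suc 0} = {}" by auto
  ultimately show ?thesis by (simp add: branches_at_def f_insert_one[OF r B])
qed

lemma branches_at_small_subsets_Suc_iff:
  "(\<forall>B\<in>small_subsets (Suc q) r. \<forall>p\<in>B. branches_at f B p) \<longleftrightarrow>
     (\<forall>B\<in>small_subsets q r. \<forall>p\<in>B. branches_at g B p) \<and>
     (r \<noteq> 0 \<longrightarrow> (\<forall>B\<in>small_subsets q (r - 1). \<forall>p\<in>B. branches_at h B p))"
proof (intro iffI conjI impI ballI)
  assume hyp: "\<forall>B\<in>small_subsets (Suc q) r. \<forall>p\<in>B. branches_at f B p"
  fix B p assume B: "B \<in> small_subsets q r" and p: "p \<in> B"
  show "branches_at g B p"
    using hyp Suc_image_in_small_subsets[OF B] p branches_at_Suc_image_iff[OF B p] by blast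
next
  assume hyp: "\<forall>B\<in>small_subsets (Suc q) r. \<forall>p\<in>B. branches_at f B p" and r: "r \<noteq> 0"
  fix B p assume B: "B \<in> small_subsets q (r - 1)" and p: "p \<in> B"
  show "branches_at h B p"
    using hyp insert_one_Suc_image_in_small_subsets[OF B r] p branches_at_insert_one_iff[OF r B p]
    by blast
next
  assume "(\<forall>B\<in>small_subsets q r. \<forall>p\<in>B. branches_at g B p) \<and>
     (r \<noteq> 0 \<longrightarrow> (\<forall>B\<in>small_subsets q (r - 1). \<forall>p\<in>B. branches_at h B p))"
  then have g: "\<And>B p. B \<in> small_subsets q r \<Longrightarrow> p \<in> B \<Longrightarrow> branches_at g B p"
    and h: "\<And>B p. r \<noteq> 0 \<Longrightarrow> B \<in> small_subsets q (r - 1) \<Longrightarrow> p \<in> B \<Longrightarrow> branches_at h B p"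
    by auto
  fix B p assume "B \<in> small_subsets (Suc q) r" and p: "p \<in> B"
  then show "branches_at f B p"
  proof (cases rule: small_subsets_Suc_cases)
    case (Suc_image B')
    then show ?thesis using p g branches_at_Suc_image_iff by auto
  next
    case (insert_one B')
    then show ?thesis using p h branches_at_insert_one_iff branches_at_insert_one_one by auto
  qed
qed

lemma image_small_subsets_Suc_subset_hypercube_iff:
  "f ` small_subsets (Suc q) r \<subseteq> hypercube (Suc q) \<longleftrightarrow>
     g ` small_subsets q r \<subseteq> hypercube q \<and> (r \<noteq> 0 \<longrightarrow> h ` small_subsets q (r - 1) \<subseteq> hypercube q)"
  by (auto simp: image_small_subsets_Suc Cons_image_subset_hypercube_Suc_iff)

lemma quasiball_map_Suc_iff:
  "quasiball_map (Suc q) r f \<longleftrightarrow> quasiball_map q r g \<and> (r \<noteq> 0 \<longrightarrow> quasiball_map q (r - 1) h)"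
  unfolding quasiball_map_iff_branches_at inj_on_small_subsets_Suc_iff
    branches_at_small_subsets_Suc_iff image_small_subsets_Suc_subset_hypercube_iff
  by auto

end

lemma hd_quasiball_map:
  assumes f: "quasiball_map (Suc q) r f" and A: "A \<in> small_subsets (Suc q) r"
  shows "f A = (if Suc 0 \<in> A then \<not> hd (f {}) else hd (f {})) # tl (f A)"
proof -
  have range: "f ` small_subsets (Suc q) r \<subseteq> hypercube (Suc q)"
    and branches: "\<And>B p. B \<in> small_subsets (Suc q) r \<Longrightarrow> p \<in> B \<Longrightarrow> branches_at f B p"
    using f by (auto simp: quasiball_map_iff_branches_at)
  have "f A \<noteq> []" using range A by auto
  have "f {} \<noteq> []" using range small_subsets_mono[OF A, of "{}"] by auto
  have "hd (f A) = (if Suc 0 \<in> A then \<not> hd (f {}) else hd (f {}))"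
  proof (cases "Suc 0 \<in> A")
    case True
    have "A \<inter> {..<Suc 0} = {}" using zero_notin_small_subset[OF A] by auto
    then show ?thesis
      using branches[OF A True] True \<open>f A \<noteq> []\<close> \<open>f {} \<noteq> []\<close> by (simp add: branches_at_def hd_conv_nth)
  next
    case False
    show ?thesis
    proof (cases "A = {}")
      case False
      define p where "p = Min A"
      have "finite A" using A by (rule finite_small_subset)
      then have "p \<in> A" "A \<inter> {..<p} = {}"
        using False by (auto simp: p_def dest: Min_le[rotated])
      moreover have "p \<noteq> 0" using \<open>p \<in> A\<close> zero_notin_small_subset[OF A] by (cases p) auto
      moreover have "p \<noteq> Suc 0" using \<open>p \<in> A\<close> \<open>Suc 0 \<notin> A\<close> by auto
      ultimately have "hd (take (p - 1) (f A)) = hd (take (p - 1) (f {}))"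
        using branches[OF A] by (simp add: branches_at_def)
      moreover have "0 < p - 1" using \<open>p \<noteq> 0\<close> \<open>p \<noteq> Suc 0\<close> by simp
      ultimately show ?thesis using \<open>Suc 0 \<notin> A\<close> by simp
    qed (simp add: \<open>Suc 0 \<notin> A\<close>)
  qed
  then show ?thesis using list.collapse[OF \<open>f A \<noteq> []\<close>] by simp
qed

definition lower_quasiball :: "nat \<Rightarrow> nat \<Rightarrow> bool list set \<Rightarrow> bool" where
  "lower_quasiball q r S \<longleftrightarrow> (if r = 0 then S = {} else quasiball q (r - 1) S)"

lemma quasiball_SucE:
  assumes "quasiball (Suc q) r S"
  obtains b S1 S2 where "quasiball q r S1" and "lower_quasiball q r S2"
    and "S = Cons b ` S1 \<union> Cons (\<not> b) ` S2"
proof -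
  obtain f where f: "quasiball_map (Suc q) r f" and S: "S = f ` small_subsets (Suc q) r"
    using assms by (auto simp: quasiball_def)
  define b where "b = hd (f {})"
  define g where "g A = tl (f (Suc ` A))" for A
  define h where "h A = tl (f (insert (Suc 0) (Suc ` A)))" for A
  have f_Suc_image: "f (Suc ` A) = b # g A" if "A \<in> small_subsets q r" for A
    using hd_quasiball_map[OF f Suc_image_in_small_subsets[OF that]] zero_notin_small_subset[OF that]
    by (simp add: b_def g_def inj_image_mem_iff)
  have f_insert_one: "f (insert (Suc 0) (Suc ` A)) = (\<not> b) # h A"
    if "r \<noteq> 0" "A \<in> small_subsets q (r - 1)" for A
    using hd_quasiball_map[OF f insert_one_Suc_image_in_small_subsets[OF that(2,1)]]
    by (simp add: b_def h_def)
  have "quasiball_map q r g" "r \<noteq> 0 \<Longrightarrow> quasiball_map q (r - 1) h"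
    using f quasiball_map_Suc_iff[OF f_Suc_image f_insert_one] by auto
  then show thesis
    using image_small_subsets_Suc[OF f_Suc_image f_insert_one]
    by (intro that[of "g ` small_subsets q r" "if r = 0 then {} else h ` small_subsets q (r - 1)" b])
      (auto simp: S quasiball_def lower_quasiball_def)
qed

lemma quasiball_SucI:
  assumes S1: "quasiball q r S1" and S2: "lower_quasiball q r S2"
  shows "quasiball (Suc q) r (Cons b ` S1 \<union> Cons (\<not> b) ` S2)"
proof -
  obtain g where g: "quasiball_map q r g" and S1_eq: "S1 = g ` small_subsets q r"
    using S1 by (auto simp: quasiball_def)
  obtain h where h: "r \<noteq> 0 \<Longrightarrow> quasiball_map q (r - 1) h"
    and S2_eq: "S2 = (if r = 0 then {} else h ` small_subsets q (r - 1))"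
    using S2 by (cases "r = 0") (auto simp: quasiball_def lower_quasiball_def)
  define f where
    "f A = (if Suc 0 \<in> A then (\<not> b) # h (shift_down A) else b # g (shift_down A))" for A
  have f_Suc_image: "f (Suc ` A) = b # g A" if "A \<in> small_subsets q r" for A
    using zero_notin_small_subset[OF that] by (simp add: f_def shift_down_Suc_image inj_image_mem_iff)
  have f_insert_one: "f (insert (Suc 0) (Suc ` A)) = (\<not> b) # h A"
    if "r \<noteq> 0" "A \<in> small_subsets q (r - 1)" for A
    using zero_notin_small_subset[OF that(2)] by (simp add: f_def shift_down_insert_one)
  have "quasiball_map (Suc q) r f"
    using g h quasiball_map_Suc_iff[OF f_Suc_image f_insert_one] by auto
  moreover have "f ` small_subsets (Suc q) r = Cons b ` S1 \<union> Cons (\<not> b) ` S2"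
    using image_small_subsets_Suc[OF f_Suc_image f_insert_one] by (simp add: S1_eq S2_eq)
  ultimately show ?thesis unfolding quasiball_def by metis
qed

lemma small_subsets_0: "small_subsets 0 r = {{}}"
  by (auto simp: small_subsets_def)

lemma quasiball_0_iff: "quasiball 0 r S \<longleftrightarrow> S = {[]}"
  by (auto simp: quasiball_def quasiball_map_def small_subsets_0 hypercube_def)

lemma quasiball_subset_hypercube: "quasiball q r S \<Longrightarrow> S \<subseteq> hypercube q"
  by (auto simp: quasiball_def quasiball_map_def)

definition quasiball_residuals :: "nat \<Rightarrow> nat \<Rightarrow> bool \<Rightarrow> bool list set \<Rightarrow> bool" where
  "quasiball_residuals q r b S \<longleftrightarrow>
     quasiball q r {w. b # w \<in> S} \<and> lower_quasiball q r {w. (\<not> b) # w \<in> S}"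

lemma quasiball_Suc_imp_residuals:
  assumes "quasiball (Suc q) r S"
  shows "\<exists>b. quasiball_residuals q r b S"
proof -
  obtain b S1 S2 where S1: "quasiball q r S1" and S2: "lower_quasiball q r S2"
    and S: "S = Cons b ` S1 \<union> Cons (\<not> b) ` S2"
    using assms by (rule quasiball_SucE)
  have "{w. b # w \<in> S} = S1" "{w. (\<not> b) # w \<in> S} = S2" by (auto simp: S)
  with S1 S2 show ?thesis by (auto simp: quasiball_residuals_def)
qed

definition answer_state :: "nat list \<Rightarrow> nat list \<Rightarrow> bool \<Rightarrow> nat list" where
  "answer_state x a c = (if c then yes_state x a else no_state x a)"

lemma paul_wins_Suc_iff:
  "paul_wins P (Suc q) x \<longleftrightarrow> (\<exists>a. legal_question x a \<and> (\<forall>c. paul_wins P q (answer_state x a c)))"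
  by (auto simp: answer_state_def all_bool_eq)

text \<open>\<open>kept x a c i\<close> counts the elements with \<open>i\<close> lies for which answer \<open>c\<close> is truthful.\<close>

definition kept :: "nat list \<Rightarrow> nat list \<Rightarrow> bool \<Rightarrow> nat \<Rightarrow> nat" where
  "kept x a c i = (if c then a ! i else x ! i - a ! i)"

lemma length_yes_state [simp]: "length (yes_state x a) = length x"
  by (simp add: yes_state_def)

lemma length_no_state [simp]: "length (no_state x a) = length x"
  by (simp add: no_state_def)

lemma nth_yes_state:
  "i < length x \<Longrightarrow> yes_state x a ! i = (if i = 0 then a ! 0 else a ! i + (x ! (i - 1) - a ! (i - 1)))"
  by (simp add: yes_state_def)

lemma nth_no_state:
  "i < length x \<Longrightarrow> no_state x a ! i = (if i = 0 then x ! 0 - a ! 0 else x ! i - a ! i + a ! (i - 1))"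
  by (simp add: no_state_def)

lemma length_answer_state [simp]: "length (answer_state x a c) = length x"
  by (simp add: answer_state_def)

lemma nth_answer_state:
  "i < length x \<Longrightarrow> answer_state x a c ! i = kept x a c i + (if i = 0 then 0 else kept x a (\<not> c) (i - 1))"
  by (auto simp: answer_state_def nth_yes_state nth_no_state kept_def)

text \<open>
  As in \<^const>\<open>x_covering\<close>, but indexed by an arbitrary finite set, so that the residual
  families after an answer are obtained by restriction; \<open>lv e\<close> is the number of lies of \<open>e\<close>.
\<close>

definition quasiball_family ::
    "nat \<Rightarrow> nat list \<Rightarrow> 'e set \<Rightarrow> ('e \<Rightarrow> nat) \<Rightarrow> ('e \<Rightarrow> bool list set) \<Rightarrow> bool" where
  "quasiball_family q x E lv S \<longleftrightarrow>
     finite E \<and> (\<forall>e\<in>E. lv e < length x \<and> quasiball q (length x - 1 - lv e) (S e)) \<and>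
     (\<forall>i<length x. card {e\<in>E. lv e = i} = x ! i)"

lemma card_quasiball_family:
  assumes "quasiball_family q x E lv S"
  shows "card E = sum_list x"
proof -
  have fin: "finite E" and lv: "\<And>e. e \<in> E \<Longrightarrow> lv e < length x"
    and count: "\<And>i. i < length x \<Longrightarrow> card {e\<in>E. lv e = i} = x ! i"
    using assms by (auto simp: quasiball_family_def)
  have "(\<Union>i<length x. {e\<in>E. lv e = i}) = E" using lv by auto
  then have "card E = card (\<Union>i<length x. {e\<in>E. lv e = i})" by simp
  also have "\<dots> = (\<Sum>i<length x. card {e\<in>E. lv e = i})"
    using fin by (intro card_UN_disjoint) auto
  also have "\<dots> = sum_list x"
    by (simp add: count sum_list_sum_nth atLeast0LessThan)
  finally show ?thesis .
qed

context
  fixes q :: nat and x a :: "nat list" and E :: "'e set" and lv :: "'e \<Rightarrow> nat"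
    and S :: "'e \<Rightarrow> bool list set" and kept_by :: "'e \<Rightarrow> bool"
  assumes family: "quasiball_family (Suc q) x E lv S"
    and residuals: "\<And>e. e \<in> E \<Longrightarrow> quasiball_residuals q (length x - 1 - lv e) (kept_by e) (S e)"
    and question: "a = map (\<lambda>i. card {e\<in>E. kept_by e \<and> lv e = i}) [0..<length x]"
begin

lemma finite_family: "finite E"
  and level_less: "e \<in> E \<Longrightarrow> lv e < length x"
  and card_level: "i < length x \<Longrightarrow> card {e\<in>E. lv e = i} = x ! i"
  using family by (auto simp: quasiball_family_def)

lemma card_kept_by_level: "i < length x \<Longrightarrow> card {e\<in>E. kept_by e = c \<and> lv e = i} = kept x a c i"
proof (cases c)
  case False
  assume i: "i < length x"
  have "{e\<in>E. \<not> kept_by e \<and> lv e = i} = {e\<in>E. lv e = i} - {e\<in>E. kept_by e \<and> lv e = i}" by auto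
  then have "card {e\<in>E. \<not> kept_by e \<and> lv e = i} =
      card {e\<in>E. lv e = i} - card {e\<in>E. kept_by e \<and> lv e = i}"
    using finite_family by (simp add: card_Diff_subset subset_iff)
  then show ?thesis using False i card_level by (simp add: kept_def question)
qed (simp add: kept_def question)

lemma legal_question_kept_by_counts: "legal_question x a"
proof -
  have "card {e\<in>E. kept_by e \<and> lv e = i} \<le> x ! i" if "i < length x" for i
    unfolding card_level[OF that, symmetric] using finite_family by (intro card_mono) auto
  then show ?thesis by (simp add: legal_question_def question)
qed

lemma answer_residual_family:
  "quasiball_family q (answer_state x a c) {e\<in>E. kept_by e = c \<or> Suc (lv e) < length x}
     (\<lambda>e. if kept_by e = c then lv e else Suc (lv e)) (\<lambda>e. {w. c # w \<in> S e})"
proof -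
  let ?E = "{e\<in>E. kept_by e = c \<or> Suc (lv e) < length x}"
  let ?lv = "\<lambda>e. if kept_by e = c then lv e else Suc (lv e)"
  have balls: "?lv e < length x \<and> quasiball q (length x - 1 - ?lv e) {w. c # w \<in> S e}"
    if "e \<in> ?E" for e
  proof (cases "kept_by e = c")
    case True
    then show ?thesis using that residuals level_less by (auto simp: quasiball_residuals_def)
  next
    case False
    then have lt: "Suc (lv e) < length x" and c: "c = (\<not> kept_by e)" using that by auto
    then have "quasiball q (length x - 1 - lv e - 1) {w. (\<not> kept_by e) # w \<in> S e}"
      using residuals[of e] that by (simp add: quasiball_residuals_def lower_quasiball_def)
    moreover have "length x - 1 - lv e - 1 = length x - 1 - Suc (lv e)" by simp
    ultimately show ?thesis using False lt c by simp
  qed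
  have levels: "card {e\<in>?E. ?lv e = i} = answer_state x a c ! i" if i: "i < length x" for i
  proof -
    let ?lied = "{e\<in>E. kept_by e \<noteq> c \<and> Suc (lv e) = i}"
    have "{e\<in>?E. ?lv e = i} = {e\<in>E. kept_by e = c \<and> lv e = i} \<union> ?lied"
      using i by auto
    then have "card {e\<in>?E. ?lv e = i} = card {e\<in>E. kept_by e = c \<and> lv e = i} + card ?lied"
      using finite_family by (simp add: card_Un_disjoint disjoint_iff)
    also have "card ?lied = (if i = 0 then 0 else kept x a (\<not> c) (i - 1))"
    proof (cases i)
      case (Suc i')
      then have "?lied = {e\<in>E. kept_by e = (\<not> c) \<and> lv e = i'}" by auto
      then show ?thesis using Suc i card_kept_by_level[of i' "\<not> c"] by simp
    qed simp
    finally show ?thesis using i by (simp add: card_kept_by_level nth_answer_state)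
  qed
  show ?thesis
    unfolding quasiball_family_def using finite_family balls levels by auto
qed

lemma answer_residual_members:
  "{e\<in>{e\<in>E. kept_by e = c \<or> Suc (lv e) < length x}. w \<in> {w. c # w \<in> S e}} = {e\<in>E. c # w \<in> S e}"
proof -
  have "Suc (lv e) < length x" if "e \<in> E" "c # w \<in> S e" "kept_by e \<noteq> c" for e
    using residuals[OF that(1)] level_less[OF that(1)] that(2,3)
    by (cases "length x - 1 - lv e = 0") (auto simp: quasiball_residuals_def lower_quasiball_def)
  then show ?thesis by auto
qed

end

lemma paul_wins_if_quasiball_family:
  assumes "quasiball_family q x E lv S" and "\<forall>w\<in>hypercube q. P (card {e\<in>E. w \<in> S e})"
  shows "paul_wins (\<lambda>y. P (sum_list y)) q x"
  using assms
proof (induction q arbitrary: x E lv S)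
  case 0
  then have "S e = {[]}" if "e \<in> E" for e
    using that by (auto simp: quasiball_family_def quasiball_0_iff)
  then have "{e\<in>E. [] \<in> S e} = E" by auto
  then show ?case using 0 card_quasiball_family[OF "0.prems"(1)] by (auto simp: hypercube_def)
next
  case (Suc q)
  have "\<forall>e\<in>E. \<exists>b. quasiball_residuals q (length x - 1 - lv e) b (S e)"
    using Suc.prems(1) by (auto simp: quasiball_family_def intro: quasiball_Suc_imp_residuals)
  then obtain kept_by
    where residuals: "\<And>e. e \<in> E \<Longrightarrow> quasiball_residuals q (length x - 1 - lv e) (kept_by e) (S e)"
    by metis
  define a where "a = map (\<lambda>i. card {e\<in>E. kept_by e \<and> lv e = i}) [0..<length x]"
  have "paul_wins (\<lambda>y. P (sum_list y)) q (answer_state x a c)" for c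
  proof (rule Suc.IH)
    show "quasiball_family q (answer_state x a c) {e\<in>E. kept_by e = c \<or> Suc (lv e) < length x}
        (\<lambda>e. if kept_by e = c then lv e else Suc (lv e)) (\<lambda>e. {w. c # w \<in> S e})"
      using Suc.prems(1) residuals a_def by (rule answer_residual_family)
    show "\<forall>w\<in>hypercube q.
        P (card {e\<in>{e\<in>E. kept_by e = c \<or> Suc (lv e) < length x}. w \<in> {w. c # w \<in> S e}})"
      using Suc.prems answer_residual_members[OF Suc.prems(1) residuals a_def]
      by (simp add: hypercube_def)
  qed
  moreover have "legal_question x a"
    using Suc.prems(1) residuals a_def by (rule legal_question_kept_by_counts)
  ultimately show ?case unfolding paul_wins_Suc_iff by blast
qed

text \<open>
  Chip \<open>(i, j)\<close> is the \<open>j\<close>-th element with \<open>i\<close> lies, the \<open>a ! i\<close> elements of the question coming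
  first. After answer \<open>c\<close> it becomes chip \<open>answer_chip x a c (i, j)\<close> of the child state, where each
  level lists first the elements that kept their number of lies; level \<open>length x\<close> means the
  element is eliminated.
\<close>

definition chips :: "nat list \<Rightarrow> (nat \<times> nat) set" where
  "chips x = (SIGMA i:{..<length x}. {..<x ! i})"

lemma finite_chips [simp]: "finite (chips x)"
  by (simp add: chips_def)

lemma quasiball_family_chips_iff:
  "quasiball_family q x (chips x) fst S \<longleftrightarrow> (\<forall>ch\<in>chips x. quasiball q (length x - 1 - fst ch) (S ch))"
proof -
  have "{ch \<in> chips x. fst ch = i} = Pair i ` {..<x ! i}" if "i < length x" for i
    using that by (auto simp: chips_def)
  then have "card {ch \<in> chips x. fst ch = i} = x ! i" if "i < length x" for i
    using that by (simp add: card_image inj_on_def)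
  then show ?thesis by (auto simp: quasiball_family_def chips_def)
qed

definition yes_chip :: "nat list \<Rightarrow> nat \<times> nat \<Rightarrow> nat \<times> nat" where
  "yes_chip a = (\<lambda>(i, j). if j < a ! i then (i, j) else (Suc i, a ! Suc i + (j - a ! i)))"

definition no_chip :: "nat list \<Rightarrow> nat list \<Rightarrow> nat \<times> nat \<Rightarrow> nat \<times> nat" where
  "no_chip x a = (\<lambda>(i, j). if j < a ! i then (Suc i, x ! Suc i - a ! Suc i + j) else (i, j - a ! i))"

definition answer_chip :: "nat list \<Rightarrow> nat list \<Rightarrow> bool \<Rightarrow> nat \<times> nat \<Rightarrow> nat \<times> nat" where
  "answer_chip x a c = (if c then yes_chip a else no_chip x a)"

lemma fst_answer_chip: "fst (answer_chip x a c (i, j)) = (if c = (j < a ! i) then i else Suc i)"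
  by (simp add: answer_chip_def yes_chip_def no_chip_def)

lemma bij_betw_yes_chip:
  assumes "legal_question x a"
  shows "bij_betw (yes_chip a) {ch \<in> chips x. fst (yes_chip a ch) < length x} (chips (yes_state x a))"
proof -
  have le: "a ! i \<le> x ! i" if "i < length x" for i
    using assms that by (simp add: legal_question_def)
  define prev where
    "prev = (\<lambda>(i, j). if j < a ! i then (i, j) else (i - 1, a ! (i - 1) + (j - a ! i)))"
  have to_answer: "yes_chip a (i, j) \<in> chips (yes_state x a) \<and> prev (yes_chip a (i, j)) = (i, j)"
    if "(i, j) \<in> chips x" "fst (yes_chip a (i, j)) < length x" for i j
    using that le[of i]
    by (auto simp: yes_chip_def prev_def chips_def nth_yes_state split: if_splits)
  have from_answer:
    "prev (i, j) \<in> chips x \<and> fst (yes_chip a (prev (i, j))) < length x \<and>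
     yes_chip a (prev (i, j)) = (i, j)"
    if "(i, j) \<in> chips (yes_state x a)" for i j
    using that le[of i] le[of "i - 1"]
    by (cases i) (auto simp: yes_chip_def prev_def chips_def nth_yes_state)
  show ?thesis
    by (rule bij_betw_byWitness[where f' = prev]) (use to_answer from_answer in fastforce)+
qed

lemma bij_betw_no_chip:
  assumes "legal_question x a"
  shows "bij_betw (no_chip x a) {ch \<in> chips x. fst (no_chip x a ch) < length x} (chips (no_state x a))"
proof -
  have le: "a ! i \<le> x ! i" if "i < length x" for i
    using assms that by (simp add: legal_question_def)
  define prev where
    "prev = (\<lambda>(i, j). if j < x ! i - a ! i then (i, a ! i + j) else (i - 1, j - (x ! i - a ! i)))"
  have to_answer: "no_chip x a (i, j) \<in> chips (no_state x a) \<and> prev (no_chip x a (i, j)) = (i, j)"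
    if "(i, j) \<in> chips x" "fst (no_chip x a (i, j)) < length x" for i j
    using that le[of i] le[of "Suc i"]
    by (auto simp: no_chip_def prev_def chips_def nth_no_state split: if_splits)
  have from_answer:
    "prev (i, j) \<in> chips x \<and> fst (no_chip x a (prev (i, j))) < length x \<and>
     no_chip x a (prev (i, j)) = (i, j)"
    if "(i, j) \<in> chips (no_state x a)" for i j
    using that le[of i] le[of "i - 1"]
    by (cases i) (auto simp: no_chip_def prev_def chips_def nth_no_state)
  show ?thesis
    by (rule bij_betw_byWitness[where f' = prev]) (use to_answer from_answer in fastforce)+
qed

lemma bij_betw_answer_chip:
  "legal_question x a \<Longrightarrow>
     bij_betw (answer_chip x a c) {ch \<in> chips x. fst (answer_chip x a c ch) < length x}
       (chips (answer_state x a c))"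
  by (cases c) (simp_all add: answer_chip_def answer_state_def bij_betw_yes_chip bij_betw_no_chip)

lemma card_Collect_bij_betw:
  assumes "bij_betw f A B"
  shows "card {a \<in> A. P (f a)} = card {b \<in> B. P b}"
proof -
  have "f ` {a \<in> A. P (f a)} = {b \<in> B. P b}"
    using assms by (auto simp: bij_betw_def)
  then have "bij_betw f {a \<in> A. P (f a)} {b \<in> B. P b}"
    by (rule bij_betw_subset[OF assms, rotated]) blast
  then show ?thesis by (rule bij_betw_same_card)
qed

definition merged_ball ::
    "nat list \<Rightarrow> nat list \<Rightarrow> (bool \<Rightarrow> nat \<times> nat \<Rightarrow> bool list set) \<Rightarrow> nat \<times> nat \<Rightarrow> bool list set" where
  "merged_ball x a T ch =
     (\<Union>c. Cons c ` (if fst (answer_chip x a c ch) < length x then T c (answer_chip x a c ch) else {}))"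

lemma Cons_mem_merged_ball_iff:
  "c # w \<in> merged_ball x a T ch \<longleftrightarrow>
     fst (answer_chip x a c ch) < length x \<and> w \<in> T c (answer_chip x a c ch)"
  by (auto simp: merged_ball_def)

lemma card_merged_ball:
  assumes "legal_question x a"
  shows "card {ch \<in> chips x. c # w \<in> merged_ball x a T ch} =
    card {ch \<in> chips (answer_state x a c). w \<in> T c ch}"
proof -
  have "{ch \<in> chips x. c # w \<in> merged_ball x a T ch} =
      {ch \<in> {ch \<in> chips x. fst (answer_chip x a c ch) < length x}. w \<in> T c (answer_chip x a c ch)}"
    by (auto simp: Cons_mem_merged_ball_iff)
  then show ?thesis using card_Collect_bij_betw[OF bij_betw_answer_chip[OF assms]] by simp
qed

lemma quasiball_merged_ball:
  assumes legal: "legal_question x a"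
    and T: "\<And>c. \<forall>ch\<in>chips (answer_state x a c). quasiball q (length x - 1 - fst ch) (T c ch)"
    and ch: "(i, j) \<in> chips x"
  shows "quasiball (Suc q) (length x - 1 - i) (merged_ball x a T (i, j))"
proof -
  define b where "b = (j < a ! i)"
  define R where
    "R c = (if fst (answer_chip x a c (i, j)) < length x then T c (answer_chip x a c (i, j))
      else {})" for c
  have ball_R: "quasiball q (length x - 1 - fst (answer_chip x a c (i, j))) (R c)"
    if "fst (answer_chip x a c (i, j)) < length x" for c
    using T bij_betw_apply[OF bij_betw_answer_chip[OF legal]] that ch by (simp add: R_def)
  have "merged_ball x a T (i, j) = (\<Union>c. Cons c ` R c)"
    by (simp add: merged_ball_def R_def)
  also have "\<dots> = Cons b ` R b \<union> Cons (\<not> b) ` R (\<not> b)"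
    by (cases b) (auto simp: UNIV_bool)
  finally have "merged_ball x a T (i, j) = Cons b ` R b \<union> Cons (\<not> b) ` R (\<not> b)" .
  moreover have "quasiball q (length x - 1 - i) (R b)"
    using ball_R[of b] ch by (simp add: fst_answer_chip b_def chips_def)
  moreover have "lower_quasiball q (length x - 1 - i) (R (\<not> b))"
  proof (cases "Suc i < length x")
    case True
    have "fst (answer_chip x a (\<not> b) (i, j)) = Suc i" by (simp add: fst_answer_chip b_def)
    then have "quasiball q (length x - 1 - Suc i) (R (\<not> b))" using ball_R[of "\<not> b"] True by simp
    moreover have "length x - 1 - Suc i = length x - 1 - i - 1" "length x - 1 - i \<noteq> 0"
      using True by auto
    ultimately show ?thesis by (simp add: lower_quasiball_def)
  next
    case False
    then show ?thesis
      using ch by (simp add: fst_answer_chip b_def lower_quasiball_def R_def chips_def)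
  qed
  ultimately show ?thesis by (simp add: quasiball_SucI)
qed

lemma quasiball_family_if_paul_wins:
  assumes "paul_wins (\<lambda>y. P (sum_list y)) q x"
  shows "\<exists>S. quasiball_family q x (chips x) fst S \<and>
    (\<forall>w\<in>hypercube q. P (card {ch \<in> chips x. w \<in> S ch}))"
  using assms
proof (induction q arbitrary: x)
  case 0
  have "quasiball_family 0 x (chips x) fst (\<lambda>_. {[]})"
    by (simp add: quasiball_family_chips_iff quasiball_0_iff)
  moreover have "card (chips x) = sum_list x"
    using card_quasiball_family[OF calculation] .
  ultimately show ?case using 0 by (auto simp: hypercube_def)
next
  case (Suc q)
  obtain a where legal: "legal_question x a"
    and wins: "\<And>c. paul_wins (\<lambda>y. P (sum_list y)) q (answer_state x a c)"
    using Suc.prems unfolding paul_wins_Suc_iff by blast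
  have "\<forall>c. \<exists>S. quasiball_family q (answer_state x a c) (chips (answer_state x a c)) fst S \<and>
      (\<forall>w\<in>hypercube q. P (card {ch \<in> chips (answer_state x a c). w \<in> S ch}))"
    using Suc.IH wins by blast
  then obtain T
    where T: "\<And>c. quasiball_family q (answer_state x a c) (chips (answer_state x a c)) fst (T c)"
    and counts: "\<And>c w. w \<in> hypercube q \<Longrightarrow> P (card {ch \<in> chips (answer_state x a c). w \<in> T c ch})"
    by metis
  have "quasiball (Suc q) (length x - 1 - fst ch) (merged_ball x a T ch)" if "ch \<in> chips x" for ch
    using quasiball_merged_ball[OF legal, of q T "fst ch" "snd ch"] T that
    by (simp add: quasiball_family_chips_iff)
  then have "quasiball_family (Suc q) x (chips x) fst (merged_ball x a T)"
    by (simp add: quasiball_family_chips_iff)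
  moreover have "P (card {ch \<in> chips x. w \<in> merged_ball x a T ch})"
    if w: "w \<in> hypercube (Suc q)" for w
  proof -
    obtain c w' where "w = c # w'" "w' \<in> hypercube q"
      using w by (cases w) (auto simp: hypercube_def)
    then show ?thesis using counts card_merged_ball[OF legal] by simp
  qed
  ultimately show ?case by blast
qed

theorem paul_wins_iff_quasiball_family:
  "paul_wins (\<lambda>y. P (sum_list y)) q x \<longleftrightarrow>
     (\<exists>S. quasiball_family q x (chips x) fst S \<and> (\<forall>w\<in>hypercube q. P (card {ch \<in> chips x. w \<in> S ch})))"
  using quasiball_family_if_paul_wins paul_wins_if_quasiball_family by blast

lemma quasiball_family_chips_case_prod_iff:
  "quasiball_family q x (chips x) fst (case_prod B) \<longleftrightarrow>
     (\<forall>i<length x. \<forall>j<x ! i. quasiball q (length x - 1 - i) (B i j))"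
  unfolding quasiball_family_chips_iff by (auto simp: chips_def)

lemma union_subset_hypercube_if_quasiball_family:
  "quasiball_family q x (chips x) fst S \<Longrightarrow> (\<Union>ch\<in>chips x. S ch) \<subseteq> hypercube q"
  using quasiball_subset_hypercube by (fastforce simp: quasiball_family_chips_iff)

lemma one_le_card_Collect_iff: "finite A \<Longrightarrow> 1 \<le> card {a \<in> A. P a} \<longleftrightarrow> (\<exists>a\<in>A. P a)"
  by (auto simp: Suc_le_eq card_gt_0_iff)

lemma x_covering_iff_multiplicity:
  "x_covering q x B \<longleftrightarrow>
     quasiball_family q x (chips x) fst (case_prod B) \<and>
     (\<forall>w\<in>hypercube q. 1 \<le> card {ch \<in> chips x. w \<in> case_prod B ch})"
proof (cases "quasiball_family q x (chips x) fst (case_prod B)")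
  case True
  have "(\<Union>i<length x. \<Union>j<x ! i. B i j) = (\<Union>ch\<in>chips x. case_prod B ch)"
    by (auto simp: chips_def)
  also have "\<dots> = hypercube q \<longleftrightarrow> (\<forall>w\<in>hypercube q. \<exists>ch\<in>chips x. w \<in> case_prod B ch)"
    using union_subset_hypercube_if_quasiball_family[OF True] by blast
  also have "\<dots> \<longleftrightarrow> (\<forall>w\<in>hypercube q. 1 \<le> card {ch \<in> chips x. w \<in> case_prod B ch})"
    by (simp only: one_le_card_Collect_iff[OF finite_chips])
  finally show ?thesis
    using True by (simp add: x_covering_def quasiball_family_chips_case_prod_iff)
qed (auto simp: x_covering_def quasiball_family_chips_case_prod_iff)

lemma card_le_one_iff_pairwise_disjoint:
  "finite C \<Longrightarrow> (\<forall>w. card {c \<in> C. w \<in> S c} \<le> 1) \<longleftrightarrow> (\<forall>c\<in>C. \<forall>c'\<in>C. c \<noteq> c' \<longrightarrow> S c \<inter> S c' = {})"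
  by (auto simp: card_le_Suc0_iff_eq)

lemma x_packing_iff_multiplicity:
  "x_packing q x B \<longleftrightarrow>
     quasiball_family q x (chips x) fst (case_prod B) \<and>
     (\<forall>w\<in>hypercube q. card {ch \<in> chips x. w \<in> case_prod B ch} \<le> 1)"
proof (cases "quasiball_family q x (chips x) fst (case_prod B)")
  case True
  have "(\<forall>i<length x. \<forall>j<x ! i. \<forall>i'<length x. \<forall>j'<x ! i'.
          (i, j) \<noteq> (i', j') \<longrightarrow> B i j \<inter> B i' j' = {}) \<longleftrightarrow>
      (\<forall>ch\<in>chips x. \<forall>ch'\<in>chips x. ch \<noteq> ch' \<longrightarrow> case_prod B ch \<inter> case_prod B ch' = {})"
    unfolding chips_def by (simp add: Ball_def) blast
  also have "\<dots> \<longleftrightarrow> (\<forall>w. card {ch \<in> chips x. w \<in> case_prod B ch} \<le> 1)"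
    using card_le_one_iff_pairwise_disjoint[of "chips x" "case_prod B"] by simp
  also have "\<dots> \<longleftrightarrow> (\<forall>w\<in>hypercube q. card {ch \<in> chips x. w \<in> case_prod B ch} \<le> 1)"
  proof -
    have "{ch \<in> chips x. w \<in> case_prod B ch} = {}" if "w \<notin> hypercube q" for w
      using union_subset_hypercube_if_quasiball_family[OF True] that by blast
    then show ?thesis by (metis card.empty zero_le)
  qed
  finally show ?thesis
    using True by (simp add: x_packing_def quasiball_family_chips_case_prod_iff)
qed (auto simp: x_packing_def quasiball_family_chips_case_prod_iff)

lemma ex_case_prod_iff: "(\<exists>B. P (case_prod B)) \<longleftrightarrow> (\<exists>S. P S)"
  by (metis case_prod_curry)

lemma ex_x_covering_iff:
  "(\<exists>B. x_covering q x B) \<longleftrightarrow>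
     (\<exists>S. quasiball_family q x (chips x) fst S \<and> (\<forall>w\<in>hypercube q. 1 \<le> card {ch \<in> chips x. w \<in> S ch}))"
  unfolding x_covering_iff_multiplicity by (rule ex_case_prod_iff)

lemma ex_x_packing_iff:
  "(\<exists>B. x_packing q x B) \<longleftrightarrow>
     (\<exists>S. quasiball_family q x (chips x) fst S \<and> (\<forall>w\<in>hypercube q. card {ch \<in> chips x. w \<in> S ch} \<le> 1))"
  unfolding x_packing_iff_multiplicity by (rule ex_case_prod_iff)

text \<open>The hypothesis only names \<open>k = length x - 1\<close>; the equivalences hold for every \<open>x\<close>.\<close>

theorem theorem19:
  fixes q k :: nat and x :: "nat list"
  assumes "length x = k + 1"
  shows "(pathological_win q x \<longleftrightarrow> (\<exists>B. x_covering q x B)) \<and>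
         (original_win q x \<longleftrightarrow> (\<exists>B. x_packing q x B))"
  unfolding pathological_win_def original_win_def ex_x_covering_iff ex_x_packing_iff
    paul_wins_iff_quasiball_family[where P = "\<lambda>n. 1 \<le> n"]
    paul_wins_iff_quasiball_family[where P = "\<lambda>n. n \<le> 1"]
  by (rule conjI refl)+

end
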